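(* Let $\alpha=3/4$. Every point $(x,y)\in[0,1]^2$ with $x+y=4/3$ satisfies $G_{3/4}(x,y)=(y,x)$, so each such point other than the fixed point $(2/3,2/3)$ is periodic with period $2$. Moreover, every point of $[0,1]^2$ other than $(0,0)$ is either periodic (with period $1$ or $2$), or eventually periodic, or its orbit is attracted to the line $x+y=4/3$, i.e. the distance from $G_{3/4}^n(x,y)$ to the line $\{x+y=4/3\}$ tends to $0$ as $n\to\infty$.
   Context: Let $\tau:[0,1]\to[0,1]$ be the symmetric tent map, $\tau(x)=2x$ for $0\le x<1/2$ and $\tau(x)=2-2x$ for $1/2\le x\le 1$. For $0<\alpha<1$ define $G_\alpha:[0,1]^2\to[0,1]^2$ by $G_\alpha(x,y)=(y,\tau(\alpha y+(1-\alpha)x))$. *)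

theory Defs
  imports "HOL-Analysis.Analysis"
begin

definition tent :: "real \<Rightarrow> real" where
  "tent x = (if x < 1/2 then 2 * x else 2 - 2 * x)"

definition G :: "real \<Rightarrow> real \<times> real \<Rightarrow> real \<times> real" where
  "G \<alpha> p = (snd p, tent (\<alpha> * snd p + (1 - \<alpha>) * fst p))"

definition unit_square :: "(real \<times> real) set" where
  "unit_square = {0..1} \<times> {0..1}"

definition diag_line :: "(real \<times> real) set" where
  "diag_line = {(x, y). x + y = 4/3}"

end

theory Submission
  imports Defs
begin

text \<open>The quantity \<open>V(x, y) = \<bar>x + 2y - 2\<bar>\<close> does not increase along orbits of \<open>G (3/4)\<close> in
  the unit square: the upper branch \<open>x + 3y \<ge> 2\<close> of the tent map changes the sign of
  \<open>x + 2y - 2\<close>, and the lower branch strictly decreases \<open>V\<close> off the axis \<open>y = 0\<close>. So \<open>V\<close>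
  converges along the orbit of \<open>p\<close> to some \<open>M\<close>. The offset \<open>x + y - 4/3\<close> from the line is
  halved (with a sign change) by the upper branch and bounded by \<open>5 (V - 1/3)\<close> after a
  lower-branch step; hence if \<open>M \<le> 1/3\<close> it tends to \<open>0\<close>. If \<open>M > 1/3\<close>, LaSalle's
  invariance principle yields a limit point \<open>q\<close> whose whole orbit has \<open>V = M\<close>. As \<open>V - 1/3\<close>
  bounds twice the offset, that orbit stays away from the line, so it cannot remain in
  the contracting upper branch; a lower-branch step with \<open>V\<close> unchanged forces two
  consecutive points onto \<open>y = 0\<close>, i.e. the orbit passes through \<open>(0, 0)\<close>, whence
  \<open>M = V(0, 0) = 2\<close>. But \<open>V < 2\<close> at every other point of the square.\<close>

lemma contracting_recurrence_tendsto_zero: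
  fixes a b :: "nat \<Rightarrow> real" and c :: real
  assumes "0 \<le> c" "c < 1" and a_nonneg: "\<And>n. 0 \<le> a n"
    and step: "\<And>n. a (Suc n) \<le> c * a n + b n" and "b \<longlonglongrightarrow> 0"
  shows "a \<longlonglongrightarrow> 0"
proof (rule order_tendstoI)
  show "\<forall>\<^sub>F n in sequentially. e < a n" if "e < 0" for e
    using that a_nonneg by (simp add: less_le_trans)
  fix e :: real assume "0 < e"
  then have "\<forall>\<^sub>F n in sequentially. b n < (1 - c) * e / 2"
    using \<open>c < 1\<close> by (intro order_tendstoD(2)[OF \<open>b \<longlonglongrightarrow> 0\<close>]) simp
  then obtain N where N: "\<And>n. n \<ge> N \<Longrightarrow> b n < (1 - c) * e / 2"
    by (auto simp: eventually_sequentially)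
  have bound: "a (N + k) \<le> c ^ k * a N + e / 2" for k
  proof (induction k)
    case 0
    then show ?case using \<open>0 < e\<close> by simp
  next
    case (Suc k)
    have "a (N + Suc k) \<le> c * a (N + k) + b (N + k)"
      using step by simp
    also have "\<dots> \<le> c * (c ^ k * a N + e / 2) + (1 - c) * e / 2"
      using Suc.IH N[of "N + k"] \<open>0 \<le> c\<close> by (intro add_mono mult_left_mono) auto
    also have "\<dots> = c ^ Suc k * a N + e / 2"
      by (simp add: field_simps)
    finally show ?case .
  qed
  have "(\<lambda>k. c ^ k * a N) \<longlonglongrightarrow> 0"
    using assms(1,2) by (intro tendsto_mult_left_zero LIMSEQ_power_zero) simp
  from order_tendstoD(2)[OF this, of "e / 2"]
  have "\<forall>\<^sub>F k in sequentially. c ^ k * a N < e / 2"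
    using \<open>0 < e\<close> by simp
  then obtain K where K: "\<And>k. k \<ge> K \<Longrightarrow> c ^ k * a N < e / 2"
    by (auto simp: eventually_sequentially)
  show "\<forall>\<^sub>F n in sequentially. a n < e"
    unfolding eventually_sequentially
  proof (intro exI allI impI)
    fix n assume "N + K \<le> n"
    then have "a (N + (n - N)) < e"
      using bound[of "n - N"] K[of "n - N"] by fastforce
    then show "a n < e" using \<open>N + K \<le> n\<close> by simp
  qed
qed

lemma funpow_image_subset:
  assumes "f ` S \<subseteq> S" shows "(f ^^ n) ` S \<subseteq> S"
  using assms by (induction n) auto

lemma continuous_on_funpow:
  assumes "continuous_on S f" "f ` S \<subseteq> S"
  shows "continuous_on S (f ^^ n)"
proof (induction n)
  case 0
  then show ?case by (simp add: continuous_on_id)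
next
  case (Suc n)
  have "(f ^^ n) ` S \<subseteq> S"
    using funpow_image_subset[OF assms(2)] .
  then show ?case
    using continuous_on_compose[OF Suc.IH continuous_on_subset[OF assms(1)]] by simp
qed

lemma limit_value_on_invariant_orbit:
  fixes f :: "'a::metric_space \<Rightarrow> 'a" and V :: "'a \<Rightarrow> real"
  assumes "compact S" "f ` S \<subseteq> S" "continuous_on S f" "continuous_on S V" "p \<in> S"
    and lim: "(\<lambda>n. V ((f ^^ n) p)) \<longlonglongrightarrow> M"
  shows "\<exists>q\<in>S. \<forall>j. V ((f ^^ j) q) = M"
proof -
  have orbit_in_S: "(f ^^ n) x \<in> S" if "x \<in> S" for n x
    using funpow_image_subset[OF assms(2)] that by blast
  obtain q \<sigma> where q: "q \<in> S" "strict_mono \<sigma>" "((\<lambda>n. (f ^^ n) p) \<circ> \<sigma>) \<longlonglongrightarrow> q"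
    using seq_compactE[OF compact_imp_seq_compact[OF \<open>compact S\<close>]] orbit_in_S \<open>p \<in> S\<close> by metis
  have "V ((f ^^ j) q) = M" for j
  proof (rule LIMSEQ_unique)
    have "continuous_on S (V \<circ> (f ^^ j))"
      using continuous_on_funpow[OF assms(3,2)] orbit_in_S
      by (intro continuous_on_compose continuous_on_subset[OF assms(4)]) auto
    from continuous_on_tendsto_compose[OF this q(3)]
    show "(\<lambda>k. (V \<circ> (f ^^ j)) ((f ^^ \<sigma> k) p)) \<longlonglongrightarrow> V ((f ^^ j) q)"
      using q(1) orbit_in_S \<open>p \<in> S\<close> by (simp add: o_def)
    have "strict_mono (\<lambda>k. j + \<sigma> k)"
      using q(2) by (simp add: strict_mono_def)
    from LIMSEQ_subseq_LIMSEQ[OF lim this]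
    show "(\<lambda>k. (V \<circ> (f ^^ j)) ((f ^^ \<sigma> k) p)) \<longlonglongrightarrow> M"
      by (simp add: o_def funpow_add)
  qed
  then show ?thesis using q(1) by blast
qed

definition lyapunov :: "real \<times> real \<Rightarrow> real" where
  "lyapunov p = fst p + 2 * snd p - 2"

definition line_offset :: "real \<times> real \<Rightarrow> real" where
  "line_offset p = fst p + snd p - 4/3"

lemma lyapunov_Pair [simp]: "lyapunov (x, y) = x + 2 * y - 2"
  by (simp add: lyapunov_def)

lemma line_offset_Pair [simp]: "line_offset (x, y) = x + y - 4/3"
  by (simp add: line_offset_def)

lemma mem_unit_square_iff: "(x, y) \<in> unit_square \<longleftrightarrow> 0 \<le> x \<and> x \<le> 1 \<and> 0 \<le> y \<and> y \<le> 1"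
  by (auto simp: unit_square_def)

lemma G_upper_branch: "x + 3 * y \<ge> 2 \<Longrightarrow> G (3/4) (x, y) = (y, 2 - (x + 3 * y) / 2)"
  by (simp add: G_def tent_def algebra_simps)

lemma G_lower_branch: "x + 3 * y < 2 \<Longrightarrow> G (3/4) (x, y) = (y, (x + 3 * y) / 2)"
  by (simp add: G_def tent_def algebra_simps)

lemma continuous_on_G: "continuous_on S (G \<alpha>)"
proof -
  have "G \<alpha> = (\<lambda>p. (snd p, 1 - \<bar>2 * (\<alpha> * snd p + (1 - \<alpha>) * fst p) - 1\<bar>))"
    by (intro ext) (simp add: G_def tent_def abs_if)
  moreover have "continuous_on S \<dots>"
    by (intro continuous_intros)
  ultimately show ?thesis by simp
qed

lemma G_in_unit_square:
  assumes "p \<in> unit_square" shows "G (3/4) p \<in> unit_square"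
proof -
  obtain x y where p: "p = (x, y)" by (cases p)
  with assms show ?thesis
    by (cases "x + 3 * y \<ge> 2") (auto simp: G_upper_branch G_lower_branch mem_unit_square_iff)
qed

lemma G_unit_square_subset: "G (3/4) ` unit_square \<subseteq> unit_square"
  using G_in_unit_square by blast

lemma lyapunov_G_upper_branch:
  "x + 3 * y \<ge> 2 \<Longrightarrow> lyapunov (G (3/4) (x, y)) = - lyapunov (x, y)"
  by (simp add: G_upper_branch field_simps)

lemma lyapunov_G_lower_branch:
  "x + 3 * y < 2 \<Longrightarrow> lyapunov (G (3/4) (x, y)) = x + 4 * y - 2"
  by (simp add: G_lower_branch field_simps)

lemma line_offset_G_upper_branch:
  "x + 3 * y \<ge> 2 \<Longrightarrow> line_offset (G (3/4) (x, y)) = - line_offset (x, y) / 2"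
  by (simp add: G_upper_branch field_simps)

lemma line_offset_G_lower_branch:
  "x + 3 * y < 2 \<Longrightarrow> line_offset (G (3/4) (x, y)) = x / 2 + 5 * y / 2 - 4/3"
  by (simp add: G_lower_branch field_simps)

lemma funpow_G_in_unit_square: "p \<in> unit_square \<Longrightarrow> (G (3/4) ^^ n) p \<in> unit_square"
  using funpow_image_subset[OF G_unit_square_subset] by blast

lemma abs_lyapunov_G_le:
  assumes "p \<in> unit_square"
  shows "\<bar>lyapunov (G (3/4) p)\<bar> \<le> \<bar>lyapunov p\<bar>"
proof -
  obtain x y where p: "p = (x, y)" by (cases p)
  with assms show ?thesis
    by (cases "x + 3 * y \<ge> 2")
      (auto simp: lyapunov_G_upper_branch lyapunov_G_lower_branch mem_unit_square_iff)
qed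

lemma abs_lyapunov_G_lower_branch_eq:
  assumes "(x, y) \<in> unit_square" "x + 3 * y < 2"
    and "\<bar>lyapunov (G (3/4) (x, y))\<bar> = \<bar>lyapunov (x, y)\<bar>"
  shows "y = 0"
  using assms by (auto simp: lyapunov_G_lower_branch mem_unit_square_iff abs_if split: if_splits)

lemma abs_lyapunov_lt_2:
  assumes "p \<in> unit_square" "p \<noteq> (0, 0)"
  shows "\<bar>lyapunov p\<bar> < 2"
  using assms by (cases p) (auto simp: mem_unit_square_iff abs_if)

lemma abs_line_offset_G_le:
  assumes "p \<in> unit_square"
  shows "\<bar>line_offset (G (3/4) p)\<bar> \<le> \<bar>line_offset p\<bar> / 2 + 5 * max 0 (\<bar>lyapunov p\<bar> - 1/3)"
proof -
  obtain x y where p: "p = (x, y)" by (cases p)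
  show ?thesis
  proof (cases "x + 3 * y \<ge> 2")
    case True
    then show ?thesis
      by (simp add: p line_offset_G_upper_branch abs_minus_commute)
  next
    case False
    with assms have "\<bar>line_offset (G (3/4) p)\<bar> \<le> 5 * (\<bar>lyapunov p\<bar> - 1/3)"
      by (auto simp: p line_offset_G_lower_branch mem_unit_square_iff abs_le_iff)
    also have "\<dots> \<le> \<bar>line_offset p\<bar> / 2 + 5 * max 0 (\<bar>lyapunov p\<bar> - 1/3)"
      by (intro add_increasing mult_left_mono) auto
    finally show ?thesis .
  qed
qed

lemma abs_lyapunov_le_abs_line_offset:
  "p \<in> unit_square \<Longrightarrow> \<bar>lyapunov p\<bar> - 1/3 \<le> 2 * \<bar>line_offset p\<bar>"
  by (cases p) (auto simp: mem_unit_square_iff abs_if)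

lemma line_offset_tendsto_zero_if_abs_lyapunov_limit_le:
  assumes "p \<in> unit_square" and lim: "(\<lambda>n. \<bar>lyapunov ((G (3/4) ^^ n) p)\<bar>) \<longlonglongrightarrow> M"
    and "M \<le> 1/3"
  shows "(\<lambda>n. line_offset ((G (3/4) ^^ n) p)) \<longlonglongrightarrow> 0"
proof -
  have "(\<lambda>n. \<bar>line_offset ((G (3/4) ^^ n) p)\<bar>) \<longlonglongrightarrow> 0"
  proof (rule contracting_recurrence_tendsto_zero)
    show "\<bar>line_offset ((G (3/4) ^^ Suc n) p)\<bar>
        \<le> 1/2 * \<bar>line_offset ((G (3/4) ^^ n) p)\<bar> + 5 * max 0 (\<bar>lyapunov ((G (3/4) ^^ n) p)\<bar> - 1/3)"
      for n using abs_line_offset_G_le[OF funpow_G_in_unit_square[OF assms(1)]] by simp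
    have "(\<lambda>n. 5 * max 0 (\<bar>lyapunov ((G (3/4) ^^ n) p)\<bar> - 1/3)) \<longlonglongrightarrow> 5 * max 0 (M - 1/3)"
      by (intro tendsto_intros lim)
    then show "(\<lambda>n. 5 * max 0 (\<bar>lyapunov ((G (3/4) ^^ n) p)\<bar> - 1/3)) \<longlonglongrightarrow> 0"
      using \<open>M \<le> 1/3\<close> by simp
  qed simp_all
  then show ?thesis by (simp only: tendsto_rabs_zero_iff)
qed

lemma line_offset_upper_branch_orbit:
  assumes "\<And>j. fst ((G (3/4) ^^ j) q) + 3 * snd ((G (3/4) ^^ j) q) \<ge> 2"
  shows "line_offset ((G (3/4) ^^ n) q) = (-1/2) ^ n * line_offset q"
proof (induction n)
  case (Suc n)
  obtain x y where xy: "(G (3/4) ^^ n) q = (x, y)" by (cases "(G (3/4) ^^ n) q")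
  with assms[of n] show ?case
    using Suc.IH by (simp add: line_offset_G_upper_branch)
qed simp

lemma constant_abs_lyapunov_orbit:
  assumes "q \<in> unit_square" and const: "\<And>j. \<bar>lyapunov ((G (3/4) ^^ j) q)\<bar> = M" and "M > 1/3"
  shows "M = 2"
proof (cases "\<forall>j. fst ((G (3/4) ^^ j) q) + 3 * snd ((G (3/4) ^^ j) q) \<ge> 2")
  case True
  have "(\<lambda>n. (-1/2) ^ n * line_offset q :: real) \<longlonglongrightarrow> 0"
    by (intro tendsto_mult_left_zero LIMSEQ_power_zero) simp
  then have "(\<lambda>n. line_offset ((G (3/4) ^^ n) q)) \<longlonglongrightarrow> 0"
    using True by (simp add: line_offset_upper_branch_orbit)
  from order_tendstoD(2)[OF tendsto_rabs_zero[OF this], of "(M - 1/3) / 2"]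
  have "\<forall>\<^sub>F n in sequentially. \<bar>line_offset ((G (3/4) ^^ n) q)\<bar> < (M - 1/3) / 2"
    using \<open>M > 1/3\<close> by simp
  then obtain n where "\<bar>line_offset ((G (3/4) ^^ n) q)\<bar> < (M - 1/3) / 2"
    by (meson eventually_sequentially order_refl)
  moreover have "M - 1/3 \<le> 2 * \<bar>line_offset ((G (3/4) ^^ n) q)\<bar>"
    using abs_lyapunov_le_abs_line_offset[OF funpow_G_in_unit_square[OF assms(1)]] const by metis
  ultimately show ?thesis by simp
next
  case False
  then obtain j a b where j: "(G (3/4) ^^ j) q = (a, b)" and "a + 3 * b < 2"
    by (metis not_le prod.collapse)
  have square: "(a, b) \<in> unit_square"
    using funpow_G_in_unit_square[OF assms(1), of j] j by simp
  have step: "(G (3/4) ^^ Suc n) q = G (3/4) ((G (3/4) ^^ n) q)" for n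
    by simp
  have "b = 0"
    using abs_lyapunov_G_lower_branch_eq[OF square \<open>a + 3 * b < 2\<close>] const[of j] const[of "Suc j"] j step[of j]
    by simp
  then have next_point: "(G (3/4) ^^ Suc j) q = (0, a/2)"
    using j \<open>a + 3 * b < 2\<close> by (simp add: G_lower_branch)
  have "a/2 = 0"
    using square \<open>b = 0\<close> const[of "Suc j"] const[of "Suc (Suc j)"] step[of "Suc j"] next_point
    by (intro abs_lyapunov_G_lower_branch_eq[of 0 "a/2"]) (auto simp: mem_unit_square_iff)
  then show ?thesis
    using const[of j] j \<open>b = 0\<close> by simp
qed

lemma continuous_on_abs_lyapunov: "continuous_on S (\<lambda>p. \<bar>lyapunov p\<bar>)"
  unfolding lyapunov_def by (intro continuous_intros)

lemma line_offset_orbit_tendsto_zero: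
  assumes "p \<in> unit_square" "p \<noteq> (0, 0)"
  shows "(\<lambda>n. line_offset ((G (3/4) ^^ n) p)) \<longlonglongrightarrow> 0"
proof -
  let ?m = "\<lambda>n. \<bar>lyapunov ((G (3/4) ^^ n) p)\<bar>"
  have "decseq ?m"
    using abs_lyapunov_G_le funpow_G_in_unit_square[OF assms(1)] by (intro decseq_SucI) simp
  then obtain M where lim: "?m \<longlonglongrightarrow> M" and lower_bound: "\<forall>i. M \<le> ?m i"
    by (rule decseq_convergent[of ?m 0]) auto
  show ?thesis
  proof (cases "M \<le> 1/3")
    case True
    with assms(1) lim show ?thesis
      by (rule line_offset_tendsto_zero_if_abs_lyapunov_limit_le)
  next
    case False
    have "compact unit_square"
      unfolding unit_square_def by (intro compact_Times compact_Icc)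
    then obtain q where "q \<in> unit_square" "\<And>j. \<bar>lyapunov ((G (3/4) ^^ j) q)\<bar> = M"
      using limit_value_on_invariant_orbit[OF _ G_unit_square_subset continuous_on_G
          continuous_on_abs_lyapunov assms(1) lim] by blast
    with False have "M = 2"
      by (intro constant_abs_lyapunov_orbit) auto
    with lower_bound abs_lyapunov_lt_2[OF assms] show ?thesis
      by (metis funpow_0 not_le)
  qed
qed

lemma infdist_diag_line_le: "infdist p diag_line \<le> \<bar>line_offset p\<bar>"
proof -
  obtain x y where p: "p = (x, y)" by (cases p)
  have "(x - line_offset p, y) \<in> diag_line"
    by (simp add: p diag_line_def)
  then have "infdist p diag_line \<le> dist (x, y) (x - line_offset p, y)"
    by (simp add: p infdist_le)
  then show ?thesis
    by (simp add: dist_Pair_Pair dist_real_def)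
qed

lemma G_swap_on_diag_line:
  assumes "x \<in> {0..1}" "y \<in> {0..1}" "x + y = 4/3"
  shows "G (3/4) (x, y) = (y, x)"
proof -
  have "x + 3 * y \<ge> 2" using assms by auto
  moreover have "2 - (x + 3 * y) / 2 = x" using assms(3) by (simp add: field_simps)
  ultimately show ?thesis by (simp add: G_upper_branch)
qed

theorem theorem5:
  shows "(\<forall>x y. x \<in> {0..1} \<and> y \<in> {0..1} \<and> x + y = 4/3 \<longrightarrow>
            G (3/4) (x, y) = (y, x) \<and>
            ((x, y) \<noteq> (2/3, 2/3) \<longrightarrow>
               (G (3/4) ^^ 2) (x, y) = (x, y) \<and> G (3/4) (x, y) \<noteq> (x, y)))
       \<and> (\<forall>p \<in> unit_square. p \<noteq> (0, 0) \<longrightarrow>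
            (G (3/4) p = p)
          \<or> ((G (3/4) ^^ 2) p = p \<and> G (3/4) p \<noteq> p)
          \<or> (\<exists>m k. k > 0 \<and> (G (3/4) ^^ (m + k)) p = (G (3/4) ^^ m) p)
          \<or> ((\<lambda>n. infdist ((G (3/4) ^^ n) p) diag_line) \<longlonglongrightarrow> 0))"
proof (intro conjI allI impI ballI)
  fix x y :: real
  assume on_line: "x \<in> {0..1} \<and> y \<in> {0..1} \<and> x + y = 4/3"
  then show swap: "G (3/4) (x, y) = (y, x)"
    by (simp add: G_swap_on_diag_line)
  assume "(x, y) \<noteq> (2/3, 2/3)"
  with on_line show "G (3/4) (x, y) \<noteq> (x, y)"
    by (auto simp: swap)
  show "(G (3/4) ^^ 2) (x, y) = (x, y)"
    using on_line by (simp add: numeral_2_eq_2 swap G_swap_on_diag_line add.commute)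
next
  fix p assume "p \<in> unit_square" "p \<noteq> (0, 0)"
  then have "(\<lambda>n. \<bar>line_offset ((G (3/4) ^^ n) p)\<bar>) \<longlonglongrightarrow> 0"
    by (intro tendsto_rabs_zero line_offset_orbit_tendsto_zero)
  then have "(\<lambda>n. infdist ((G (3/4) ^^ n) p) diag_line) \<longlonglongrightarrow> 0"
    by (rule Lim_null_comparison[rotated]) (simp add: infdist_nonneg infdist_diag_line_le)
  then show "G (3/4) p = p \<or> ((G (3/4) ^^ 2) p = p \<and> G (3/4) p \<noteq> p)
      \<or> (\<exists>m k. k > 0 \<and> (G (3/4) ^^ (m + k)) p = (G (3/4) ^^ m) p)
      \<or> (\<lambda>n. infdist ((G (3/4) ^^ n) p) diag_line) \<longlonglongrightarrow> 0"
    by blast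
qed

end
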